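(* Let $K$ and $L$ be sets of positive integers, and suppose $(X,\mathcal{G},\mathcal{A})$ is a $(K,1)$-GDD with group sizes in $L$ such that (1) for every $k\in K$ there is a nested $(4,1)$-GDD of type $3^k$, and (2) for every $\ell\in L$ there is a nested $(3\ell+1,4,1)$-BIBD. Then there is a nested $(3|X|+1,4,1)$-BIBD.
   Context: A $(K,1)$-GDD with group sizes in $L$ is a triple $(X,\mathcal{G},\mathcal{A})$ where $\mathcal{G}$ is a partition of the point set $X$ into groups with $|G|\in L$ for all $G\in\mathcal{G}$, and $\mathcal{A}$ is a set of blocks with $|A|\in K$, each block meeting each group in at most one point, and every pair of points from different groups lying in exactly one block. A $(k,\lambda)$-GDD of type $t^u$ is such a structure with $tu$ points, $u$ groups of size $t$, all blocks of size $k$ (blocks forming a multiset) and every pair from different groups in exactly $\lambda$ blocks; a partial one has "at most $\lambda$". It is nested if there is $\phi:\mathcal{A}\to X$ with $(X,\mathcal{G},\{A\cup\{\phi(A)\}\})$ a partial $(k+1,\lambda+1)$-GDD of type $t^u$. A $(v,k,\lambda)$-BIBD is a set $X$ of $v$ points with a multiset $\mathcal{A}$ of $k$-subsets such that every pair of distinct points lies in exactly $\lambda$ blocks (partial: at most $\lambda$); it is nested if there is $\phi:\mathcal{A}\to X$ such that $\{A\cup\{\phi(A)\}:A\in\mathcal{A}\}$ is the block multiset of a partial $(v,k+1,\lambda+1)$-BIBD (in particular $\phi(A)\notin A$). *)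

theory Defs
  imports Main "HOL-Library.Multiset"
begin

definition is_group_partition :: "'a set \<Rightarrow> 'a set set \<Rightarrow> bool" where
  "is_group_partition X \<G> \<longleftrightarrow>
     (\<forall>G\<in>\<G>. G \<noteq> {}) \<and> \<Union>\<G> = X \<and>
     (\<forall>G1\<in>\<G>. \<forall>G2\<in>\<G>. G1 \<noteq> G2 \<longrightarrow> G1 \<inter> G2 = {})"

(* (K,1)-GDD with group sizes in L (blocks form a set, since lambda = 1) *)
definition K1_GDD :: "nat set \<Rightarrow> nat set \<Rightarrow> 'a set \<Rightarrow> 'a set set \<Rightarrow> 'a set set \<Rightarrow> bool" where
  "K1_GDD K L X \<G> \<A> \<longleftrightarrow>
     finite X \<and> is_group_partition X \<G> \<and>
     (\<forall>G\<in>\<G>. card G \<in> L) \<and>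
     (\<forall>A\<in>\<A>. A \<subseteq> X \<and> card A \<in> K) \<and>
     (\<forall>A\<in>\<A>. \<forall>G\<in>\<G>. card (A \<inter> G) \<le> 1) \<and>
     (\<forall>x\<in>X. \<forall>y\<in>X. x \<noteq> y \<longrightarrow> \<not> (\<exists>G\<in>\<G>. x \<in> G \<and> y \<in> G) \<longrightarrow>
        card {A\<in>\<A>. x \<in> A \<and> y \<in> A} = 1)"

definition pair_count :: "'a set multiset \<Rightarrow> 'a \<Rightarrow> 'a \<Rightarrow> nat" where
  "pair_count \<A> x y = size (filter_mset (\<lambda>B. x \<in> B \<and> y \<in> B) \<A>)"

definition GDD_type :: "bool \<Rightarrow> nat \<Rightarrow> nat \<Rightarrow> nat \<Rightarrow> nat \<Rightarrow> 'a set \<Rightarrow> 'a set set \<Rightarrow> 'a set multiset \<Rightarrow> bool" where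
  "GDD_type partial k lam t u X \<G> \<A> \<longleftrightarrow>
     finite X \<and> card X = t * u \<and> is_group_partition X \<G> \<and>
     card \<G> = u \<and> (\<forall>G\<in>\<G>. card G = t) \<and>
     (\<forall>A\<in>#\<A>. A \<subseteq> X \<and> card A = k) \<and>
     (\<forall>A\<in>#\<A>. \<forall>G\<in>\<G>. card (A \<inter> G) \<le> 1) \<and>
     (\<forall>x\<in>X. \<forall>y\<in>X. x \<noteq> y \<longrightarrow> \<not> (\<exists>G\<in>\<G>. x \<in> G \<and> y \<in> G) \<longrightarrow>
        (if partial then pair_count \<A> x y \<le> lam else pair_count \<A> x y = lam))"

definition nested_GDD :: "nat \<Rightarrow> nat \<Rightarrow> nat \<Rightarrow> nat \<Rightarrow> 'a set \<Rightarrow> 'a set set \<Rightarrow> 'a set multiset \<Rightarrow> bool" where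
  "nested_GDD k lam t u X \<G> \<A> \<longleftrightarrow>
     GDD_type False k lam t u X \<G> \<A> \<and>
     (\<exists>\<phi> :: 'a set \<Rightarrow> 'a.
        GDD_type True (k + 1) (lam + 1) t u X \<G> (image_mset (\<lambda>A. insert (\<phi> A) A) \<A>))"

definition BIBD :: "bool \<Rightarrow> nat \<Rightarrow> nat \<Rightarrow> nat \<Rightarrow> 'a set \<Rightarrow> 'a set multiset \<Rightarrow> bool" where
  "BIBD partial v k lam X \<A> \<longleftrightarrow>
     finite X \<and> card X = v \<and>
     (\<forall>A\<in>#\<A>. A \<subseteq> X \<and> card A = k) \<and>
     (\<forall>x\<in>X. \<forall>y\<in>X. x \<noteq> y \<longrightarrow>
        (if partial then pair_count \<A> x y \<le> lam else pair_count \<A> x y = lam))"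

definition nested_BIBD :: "nat \<Rightarrow> nat \<Rightarrow> nat \<Rightarrow> 'a set \<Rightarrow> 'a set multiset \<Rightarrow> bool" where
  "nested_BIBD v k lam X \<A> \<longleftrightarrow>
     BIBD False v k lam X \<A> \<and>
     (\<exists>\<phi> :: 'a set \<Rightarrow> 'a.
        BIBD True v (k + 1) (lam + 1) X (image_mset (\<lambda>A. insert (\<phi> A) A) \<A>))"

end

theory Submission
  imports Defs "HOL-Library.Disjoint_Sets"
begin

(* Wilson's fundamental construction with weight 3, followed by filling in the groups.  The new
   points are the copies X x {0,1,2} together with a point at infinity (None).  On the copies of
   each block A of the master GDD place a nested (4,1)-GDD of type 3^|A| whose groups are the
   copies of single points; on the copies of each group G together with infinity place a nested
   (3|G|+1,4,1)-BIBD.  Copies of two points from different groups lie together in exactly one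
   block A, and every other pair lies in the copies of exactly one group together with infinity,
   so the pieces cover every pair exactly once and their nested blocks cover it at most twice.
   A (v,4,1)-BIBD has no repeated blocks, hence the nesting points of the pieces combine into a
   single nesting function on the union. *)

section \<open>Pair counts\<close>

lemma pair_count_union [simp]: "pair_count (M + N) x y = pair_count M x y + pair_count N x y"
  by (simp add: pair_count_def)

lemma pair_count_sum: "pair_count (\<Sum>i\<in>I. M i) x y = (\<Sum>i\<in>I. pair_count (M i) x y)"
  by (induction I rule: infinite_finite_induct) (simp_all add: pair_count_def)

lemma pair_count_sum_single:
  assumes "finite I" "i \<in> I" "\<And>j. j \<in> I \<Longrightarrow> j \<noteq> i \<Longrightarrow> pair_count (M j) x y = 0"
  shows "pair_count (\<Sum>j\<in>I. M j) x y = pair_count (M i) x y"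
  using assms by (simp add: pair_count_sum sum.remove)

lemma pair_count_eq_0_iff: "pair_count M x y = 0 \<longleftrightarrow> (\<forall>B\<in>#M. x \<notin> B \<or> y \<notin> B)"
  by (auto simp: pair_count_def)

lemma pair_count_eq_0_if_outside:
  assumes "\<forall>B\<in>#M. B \<subseteq> S" "x \<notin> S \<or> y \<notin> S"
  shows "pair_count M x y = 0"
  using assms by (auto simp: pair_count_eq_0_iff)

lemma pair_count_image_mset:
  assumes "inj_on f Y" "\<forall>B\<in>#M. B \<subseteq> Y" "x \<in> Y" "y \<in> Y"
  shows "pair_count (image_mset (image f) M) (f x) (f y) = pair_count M x y"
proof -
  have "filter_mset (\<lambda>B. f x \<in> f ` B \<and> f y \<in> f ` B) M = filter_mset (\<lambda>B. x \<in> B \<and> y \<in> B) M"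
  proof (rule filter_mset_cong[OF refl])
    fix B assume "B \<in># M"
    then show "(f x \<in> f ` B \<and> f y \<in> f ` B) = (x \<in> B \<and> y \<in> B)"
      using assms by (meson inj_on_image_mem_iff)
  qed
  then show ?thesis
    by (simp add: pair_count_def filter_mset_image_mset)
qed

lemma GDD_type_blocks_subset: "GDD_type p k lam t u X \<G> M \<Longrightarrow> \<forall>B\<in>#M. B \<subseteq> X"
  by (simp add: GDD_type_def)

lemma BIBD_blocks_subset: "BIBD p v k lam X M \<Longrightarrow> \<forall>B\<in>#M. B \<subseteq> X"
  by (simp add: BIBD_def)

lemma GDD_type_blocks:
  "GDD_type p k lam t u X \<G> M \<Longrightarrow> B \<in># M \<Longrightarrow> B \<subseteq> X \<and> card B = k"
  by (simp add: GDD_type_def)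

lemma BIBD_blocks: "BIBD p v k lam X M \<Longrightarrow> B \<in># M \<Longrightarrow> B \<subseteq> X \<and> card B = k"
  by (simp add: BIBD_def)

lemma GDD_type_pair_count:
  assumes "GDD_type p k lam t u X \<G> M" "x \<in> X" "y \<in> X" "x \<noteq> y" "\<not> (\<exists>G\<in>\<G>. x \<in> G \<and> y \<in> G)"
  shows "if p then pair_count M x y \<le> lam else pair_count M x y = lam"
  using assms unfolding GDD_type_def by blast

lemma BIBD_pair_count:
  assumes "BIBD p v k lam X M" "x \<in> X" "y \<in> X" "x \<noteq> y"
  shows "if p then pair_count M x y \<le> lam else pair_count M x y = lam"
  using assms unfolding BIBD_def by blast

lemma GDD_type_pair_count_same_group:
  assumes "GDD_type p k lam t u X \<G> M" "G \<in> \<G>" "x \<in> G" "y \<in> G" "x \<noteq> y"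
  shows "pair_count M x y = 0"
  unfolding pair_count_eq_0_iff
proof (intro ballI)
  fix B assume "B \<in># M"
  then have "card (B \<inter> G) \<le> 1" "finite B"
    using assms(1,2) unfolding GDD_type_def by (auto intro: finite_subset)
  moreover have "card {x, y} = 2"
    using assms(5) by simp
  ultimately have "\<not> {x, y} \<subseteq> B \<inter> G"
    using card_mono[of "B \<inter> G" "{x, y}"] by auto
  then show "x \<notin> B \<or> y \<notin> B"
    using assms(3,4) by blast
qed

section \<open>Relabelling the points of a design\<close>

lemma is_group_partition_iff_partition_on: "is_group_partition X \<G> \<longleftrightarrow> partition_on X \<G>"
  by (auto simp: is_group_partition_def partition_on_def pairwise_def disjnt_def)

lemma partition_on_image:
  assumes "partition_on Y \<H>" "inj_on f Y"
  shows "partition_on (f ` Y) ((`) f ` \<H>)"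
proof -
  have "{} \<notin> (`) f ` \<H>"
    using partition_onD3[OF assms(1)] by auto
  then show ?thesis
    using partition_on_inj_image[OF assms] by simp
qed

lemma inj_on_image_partition:
  assumes "partition_on Y \<H>" "inj_on f Y"
  shows "inj_on (image f) \<H>"
  using inj_on_image_Pow[OF assms(2)] partition_onD1[OF assms(1)] by (auto intro: inj_on_subset)

lemma bij_betw_glue_partitions:
  assumes P: "partition_on Y \<H>" and Q: "partition_on Z \<Gamma>" and \<alpha>: "bij_betw \<alpha> \<H> \<Gamma>"
    and \<beta>: "\<And>H. H \<in> \<H> \<Longrightarrow> bij_betw (\<beta> H) H (\<alpha> H)"
  shows "\<exists>f. bij_betw f Y Z \<and> (`) f ` \<H> = \<Gamma>"
proof -
  define f where "f y = \<beta> (THE H. H \<in> \<H> \<and> y \<in> H) y" for y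
  have f_bij: "bij_betw f H (\<alpha> H)" if "H \<in> \<H>" for H
  proof (rule bij_betw_cong[THEN iffD1, OF _ \<beta>[OF that]])
    fix y assume "y \<in> H"
    then have "(THE H. H \<in> \<H> \<and> y \<in> H) = H"
      using that P by (intro the_equality) (auto simp: partition_on_def pairwise_def disjnt_def)
    then show "\<beta> H y = f y" by (simp add: f_def)
  qed
  have "disjoint_family_on \<alpha> \<H>"
    unfolding disjoint_family_on_def
  proof (intro ballI impI)
    fix m n assume "m \<in> \<H>" "n \<in> \<H>" "m \<noteq> n"
    then have "\<alpha> m \<noteq> \<alpha> n" "\<alpha> m \<in> \<Gamma>" "\<alpha> n \<in> \<Gamma>"
      using \<alpha> by (auto simp: bij_betw_def inj_on_def)
    then show "\<alpha> m \<inter> \<alpha> n = {}"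
      using Q by (auto simp: partition_on_def pairwise_def disjnt_def)
  qed
  then have "bij_betw f (\<Union>\<H>) (\<Union>(\<alpha> ` \<H>))"
    using bij_betw_UNION_disjoint[of \<alpha> \<H> f id] f_bij by simp
  moreover have "(`) f ` \<H> = \<alpha> ` \<H>"
    by (rule image_cong[OF refl]) (simp add: f_bij bij_betw_imp_surj_on)
  moreover have "\<Union>\<H> = Y" "\<Union>(\<alpha> ` \<H>) = Z"
    using P Q bij_betw_imp_surj_on[OF \<alpha>] by (simp_all add: partition_on_def)
  ultimately show ?thesis
    using bij_betw_imp_surj_on[OF \<alpha>] by auto
qed

lemma bij_betw_partitions:
  assumes P: "partition_on Y \<H>" and Q: "partition_on Z \<Gamma>"
    and "finite Y" "finite Z" "card \<H> = card \<Gamma>"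
    and "\<forall>H\<in>\<H>. card H = t" "\<forall>C\<in>\<Gamma>. card C = t"
  shows "\<exists>f. bij_betw f Y Z \<and> (`) f ` \<H> = \<Gamma>"
proof -
  have "finite \<H>" "finite \<Gamma>"
    using assms finite_elements by blast+
  then obtain \<alpha> where \<alpha>: "bij_betw \<alpha> \<H> \<Gamma>"
    using assms(5) finite_same_card_bij by blast
  have "\<exists>\<beta>. bij_betw \<beta> H (\<alpha> H)" if "H \<in> \<H>" for H
  proof (rule finite_same_card_bij)
    have "\<alpha> H \<in> \<Gamma>"
      using \<alpha> that bij_betwE by blast
    then show "finite H" "finite (\<alpha> H)" "card H = card (\<alpha> H)"
      using that assms(3,4,6,7) P Q by (auto dest: partition_onD1 intro: finite_subset)
  qed
  then obtain \<beta> where "\<And>H. H \<in> \<H> \<Longrightarrow> bij_betw (\<beta> H) H (\<alpha> H)"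
    by metis
  with P Q \<alpha> show ?thesis
    by (rule bij_betw_glue_partitions)
qed

lemma card_image_Int:
  assumes "inj_on f Y" "B \<subseteq> Y" "H \<subseteq> Y"
  shows "card (f ` B \<inter> f ` H) = card (B \<inter> H)"
proof -
  have "f ` B \<inter> f ` H = f ` (B \<inter> H)"
    using assms by (simp add: inj_on_image_Int)
  also have "card \<dots> = card (B \<inter> H)"
    using assms by (intro card_image inj_on_subset[OF assms(1)]) auto
  finally show ?thesis .
qed

lemma image_mset_image_insert:
  assumes "inj_on f Y" "\<forall>B\<in>#M. B \<subseteq> Y"
  shows "image_mset (\<lambda>A. insert (f (\<phi> (inv_into Y f ` A))) A) (image_mset (image f) M)
       = image_mset (image f) (image_mset (\<lambda>A. insert (\<phi> A) A) M)"
  unfolding multiset.map_comp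
proof (rule image_mset_cong)
  fix B assume "B \<in># M"
  then have "inv_into Y f ` f ` B = B"
    using assms by simp
  then show "((\<lambda>A. insert (f (\<phi> (inv_into Y f ` A))) A) \<circ> image f) B
      = (image f \<circ> (\<lambda>A. insert (\<phi> A) A)) B"
    by simp
qed

lemma BIBD_image:
  assumes "BIBD p v k lam Y M" "bij_betw f Y Z"
  shows "BIBD p v k lam Z (image_mset (image f) M)"
proof -
  have inj: "inj_on f Y" and Z: "Z = f ` Y"
    using assms(2) by (auto simp: bij_betw_def)
  have sub: "\<forall>B\<in>#M. B \<subseteq> Y"
    using assms(1) by (simp add: BIBD_def)
  show ?thesis
    unfolding BIBD_def
  proof (intro conjI ballI impI)
    show "finite Z" "card Z = v"
      using assms by (auto simp: BIBD_def bij_betw_finite bij_betw_same_card[symmetric])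
  next
    fix A assume "A \<in># image_mset (image f) M"
    then obtain B where B: "B \<in># M" "A = f ` B" by auto
    then show "A \<subseteq> Z" "card A = k"
      using assms(1) inj Z by (auto simp: BIBD_def card_image inj_on_subset)
  next
    fix x' y' assume "x' \<in> Z" "y' \<in> Z" "x' \<noteq> y'"
    then obtain x y where "x \<in> Y" "y \<in> Y" "x' = f x" "y' = f y" "x \<noteq> y"
      using Z by auto
    then show "if p then pair_count (image_mset (image f) M) x' y' \<le> lam
               else pair_count (image_mset (image f) M) x' y' = lam"
      using assms(1) pair_count_image_mset[OF inj sub] by (simp add: BIBD_def)
  qed
qed

lemma nested_BIBD_image:
  assumes "nested_BIBD v k lam Y M" "bij_betw f Y Z"
  shows "nested_BIBD v k lam Z (image_mset (image f) M)"
proof -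
  obtain \<phi> where \<phi>: "BIBD True v (k + 1) (lam + 1) Y (image_mset (\<lambda>A. insert (\<phi> A) A) M)"
    using assms(1) by (auto simp: nested_BIBD_def)
  have "\<forall>B\<in>#M. B \<subseteq> Y"
    using assms(1) by (simp add: nested_BIBD_def BIBD_def)
  with BIBD_image[OF \<phi> assms(2)] have "BIBD True v (k + 1) (lam + 1) Z
      (image_mset (\<lambda>A. insert (f (\<phi> (inv_into Y f ` A))) A) (image_mset (image f) M))"
    by (simp add: image_mset_image_insert bij_betw_imp_inj_on[OF assms(2)])
  moreover have "BIBD False v k lam Z (image_mset (image f) M)"
    using assms(1) by (intro BIBD_image[OF _ assms(2)]) (simp add: nested_BIBD_def)
  ultimately show ?thesis
    unfolding nested_BIBD_def by (intro conjI exI)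
qed

lemma nested_BIBD_transfer:
  assumes "nested_BIBD v k lam (Y :: 'b set) M" "finite (Z :: 'c set)" "card Z = v"
  shows "\<exists>M'. nested_BIBD v k lam Z M'"
proof -
  have "finite Y" "card Y = v"
    using assms(1) by (auto simp: nested_BIBD_def BIBD_def)
  then obtain f where "bij_betw f Y Z"
    using assms(2,3) finite_same_card_bij by metis
  then show ?thesis
    using nested_BIBD_image[OF assms(1)] by blast
qed

lemma GDD_type_image:
  assumes G: "GDD_type p k lam t u Y \<H> M" and "bij_betw f Y Z"
  shows "GDD_type p k lam t u Z ((`) f ` \<H>) (image_mset (image f) M)"
proof -
  have inj: "inj_on f Y" and Z: "Z = f ` Y"
    using assms(2) by (auto simp: bij_betw_def)
  have sub: "\<forall>B\<in>#M. B \<subseteq> Y" and P: "partition_on Y \<H>"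
    using G by (simp_all add: GDD_type_def is_group_partition_iff_partition_on)
  then have HY: "\<forall>H\<in>\<H>. H \<subseteq> Y"
    by (auto dest: partition_onD1)
  show ?thesis
    unfolding GDD_type_def
  proof (intro conjI ballI impI)
    show "finite Z" "card Z = t * u"
      using assms by (auto simp: GDD_type_def bij_betw_finite bij_betw_same_card[symmetric])
    show "is_group_partition Z ((`) f ` \<H>)"
      using partition_on_image[OF P inj] Z by (simp add: is_group_partition_iff_partition_on)
    show "card ((`) f ` \<H>) = u"
      using G inj_on_image_partition[OF P inj] by (simp add: GDD_type_def card_image)
  next
    fix G' assume "G' \<in> (`) f ` \<H>"
    then show "card G' = t"
      using G inj HY by (auto simp: GDD_type_def card_image inj_on_subset)
  next
    fix A assume "A \<in># image_mset (image f) M"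
    then show "A \<subseteq> Z" "card A = k"
      using G inj sub Z by (auto simp: GDD_type_def card_image inj_on_subset)
  next
    fix A G' assume "A \<in># image_mset (image f) M" "G' \<in> (`) f ` \<H>"
    then obtain B H where B: "B \<in># M" "A = f ` B" "H \<in> \<H>" "G' = f ` H"
      by auto
    then show "card (A \<inter> G') \<le> 1"
      using G card_image_Int[OF inj] sub HY by (simp add: GDD_type_def)
  next
    fix x' y' assume "x' \<in> Z" "y' \<in> Z" "x' \<noteq> y'"
      and no_group: "\<not> (\<exists>G'\<in>(`) f ` \<H>. x' \<in> G' \<and> y' \<in> G')"
    then obtain x y where "x \<in> Y" "y \<in> Y" "x' = f x" "y' = f y" "x \<noteq> y"
      using Z by auto
    moreover from this no_group have "\<not> (\<exists>H\<in>\<H>. x \<in> H \<and> y \<in> H)"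
      by blast
    ultimately show "if p then pair_count (image_mset (image f) M) x' y' \<le> lam
               else pair_count (image_mset (image f) M) x' y' = lam"
      using G pair_count_image_mset[OF inj sub] by (simp add: GDD_type_def)
  qed
qed

lemma nested_GDD_image:
  assumes "nested_GDD k lam t u Y \<H> M" "bij_betw f Y Z"
  shows "nested_GDD k lam t u Z ((`) f ` \<H>) (image_mset (image f) M)"
proof -
  obtain \<phi> where
    \<phi>: "GDD_type True (k + 1) (lam + 1) t u Y \<H> (image_mset (\<lambda>A. insert (\<phi> A) A) M)"
    using assms(1) by (auto simp: nested_GDD_def)
  have "\<forall>B\<in>#M. B \<subseteq> Y"
    using assms(1) by (simp add: nested_GDD_def GDD_type_def)
  with GDD_type_image[OF \<phi> assms(2)] have "GDD_type True (k + 1) (lam + 1) t u Z ((`) f ` \<H>)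
      (image_mset (\<lambda>A. insert (f (\<phi> (inv_into Y f ` A))) A) (image_mset (image f) M))"
    by (simp add: image_mset_image_insert bij_betw_imp_inj_on[OF assms(2)])
  moreover have "GDD_type False k lam t u Z ((`) f ` \<H>) (image_mset (image f) M)"
    using assms(1) by (intro GDD_type_image[OF _ assms(2)]) (simp add: nested_GDD_def)
  ultimately show ?thesis
    unfolding nested_GDD_def by (intro conjI exI)
qed

lemma nested_GDD_transfer:
  assumes "nested_GDD k lam t u (Y :: 'b set) \<H> M"
    and "partition_on (Z :: 'c set) \<Gamma>" "finite Z" "card \<Gamma> = u" "\<forall>C\<in>\<Gamma>. card C = t"
  shows "\<exists>M'. nested_GDD k lam t u Z \<Gamma> M'"
proof -
  have "partition_on Y \<H>" "finite Y" "card \<H> = u" "\<forall>H\<in>\<H>. card H = t"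
    using assms(1) by (simp_all add: nested_GDD_def GDD_type_def is_group_partition_iff_partition_on)
  then obtain f where "bij_betw f Y Z" "(`) f ` \<H> = \<Gamma>"
    using bij_betw_partitions assms(2-5) by metis
  then show ?thesis
    using nested_GDD_image[OF assms(1)] by metis
qed

section \<open>Nestings of designs without repeated blocks\<close>

lemma image_mset_sum: "image_mset f (\<Sum>i\<in>I. M i) = (\<Sum>i\<in>I. image_mset f (M i))"
  by (induction I rule: infinite_finite_induct) simp_all

lemma nested_GDD_pointed:
  assumes "nested_GDD k lam t u Y \<H> M"
  shows "\<exists>N. image_mset fst N = M \<and>
    GDD_type True (k + 1) (lam + 1) t u Y \<H> (image_mset (\<lambda>(B, p). insert p B) N)"
proof -
  obtain \<phi> where "GDD_type True (k + 1) (lam + 1) t u Y \<H> (image_mset (\<lambda>B. insert (\<phi> B) B) M)"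
    using assms by (auto simp: nested_GDD_def)
  then show ?thesis
    by (intro exI[of _ "image_mset (\<lambda>B. (B, \<phi> B)) M"]) (simp add: multiset.map_comp comp_def)
qed

lemma nested_BIBD_pointed:
  assumes "nested_BIBD v k lam Y M"
  shows "\<exists>N. image_mset fst N = M \<and>
    BIBD True v (k + 1) (lam + 1) Y (image_mset (\<lambda>(B, p). insert p B) N)"
proof -
  obtain \<phi> where "BIBD True v (k + 1) (lam + 1) Y (image_mset (\<lambda>B. insert (\<phi> B) B) M)"
    using assms by (auto simp: nested_BIBD_def)
  then show ?thesis
    by (intro exI[of _ "image_mset (\<lambda>B. (B, \<phi> B)) M"]) (simp add: multiset.map_comp comp_def)
qed

lemma BIBD_count_le_1:
  assumes "BIBD False v k 1 Y M" "2 \<le> k"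
  shows "count M B \<le> 1"
proof (cases "B \<in># M")
  case True
  then have "card B = k" "B \<subseteq> Y"
    using assms(1) by (simp_all add: BIBD_def)
  then obtain x y where xy: "x \<in> B" "y \<in> B" "x \<noteq> y"
    using assms(2) card_le_Suc0_iff_eq[of B] card.infinite by force
  then have "count M B = count (filter_mset (\<lambda>B. x \<in> B \<and> y \<in> B) M) B"
    by simp
  also have "\<dots> \<le> pair_count M x y"
    unfolding pair_count_def by (rule count_le_size)
  also have "\<dots> = 1"
    using assms(1) xy \<open>B \<subseteq> Y\<close> unfolding BIBD_def by (simp add: subsetD)
  finally show ?thesis .
qed (simp add: not_in_iff)

lemma graph_of_fst_distinct:
  assumes "\<forall>B. count (image_mset fst N) B \<le> 1"
  shows "\<exists>\<phi>. N = image_mset (\<lambda>B. (B, \<phi> B)) (image_mset fst N)"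
proof -
  define \<phi> where "\<phi> B = (SOME p. (B, p) \<in># N)" for B
  have "\<phi> B = p" if Bp: "(B, p) \<in># N" for B p
  proof (rule ccontr)
    assume "\<phi> B \<noteq> p"
    obtain N' where N': "N = add_mset (B, p) N'"
      using multi_member_split[OF Bp] by blast
    have "(B, \<phi> B) \<in># N"
      unfolding \<phi>_def using Bp by (rule someI)
    with \<open>\<phi> B \<noteq> p\<close> N' have "(B, \<phi> B) \<in># N'"
      by simp
    then have "B \<in># image_mset fst N'"
      using imageI[of _ _ fst] by force
    then have "2 \<le> count (image_mset fst N) B"
      using N' by (simp add: Suc_le_eq)
    then show False
      using assms[rule_format, of B] by linarith
  qed
  then have "image_mset (\<lambda>z. (fst z, \<phi> (fst z))) N = N"
    by (intro multiset.map_ident_strong) auto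
  moreover have "image_mset (\<lambda>B. (B, \<phi> B)) (image_mset fst N) = image_mset (\<lambda>z. (fst z, \<phi> (fst z))) N"
    by (simp add: multiset.map_comp comp_def)
  ultimately show ?thesis
    by (intro exI[of _ \<phi>]) simp
qed

lemma nested_BIBD_of_pointed:
  assumes "BIBD False v k 1 Y (image_mset fst N)" "2 \<le> k"
    and "BIBD True v (k + 1) 2 Y (image_mset (\<lambda>(B, p). insert p B) N)"
  shows "nested_BIBD v k 1 Y (image_mset fst N)"
proof -
  obtain \<phi> where \<phi>: "N = image_mset (\<lambda>B. (B, \<phi> B)) (image_mset fst N)"
    using graph_of_fst_distinct BIBD_count_le_1[OF assms(1,2)] by blast
  have "image_mset (\<lambda>(B, p). insert p B) (image_mset (\<lambda>B. (B, \<phi> B)) (image_mset fst N))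
      = image_mset (\<lambda>B. insert (\<phi> B) B) (image_mset fst N)"
    by (simp add: multiset.map_comp comp_def)
  with assms(3) \<phi> have "BIBD True v (k + 1) 2 Y (image_mset (\<lambda>B. insert (\<phi> B) B) (image_mset fst N))"
    by simp
  with assms(1) show ?thesis
    unfolding nested_BIBD_def one_add_one by (intro conjI exI)
qed

section \<open>GDDs of index one\<close>

lemma K1_GDD_finite_points: "K1_GDD K L X \<G> \<A> \<Longrightarrow> finite X"
  unfolding K1_GDD_def by blast

lemma K1_GDD_finite:
  assumes "K1_GDD K L X \<G> \<A>"
  shows "finite \<A>" "finite \<G>"
proof -
  have "finite X" "\<A> \<subseteq> Pow X" "\<Union>\<G> = X"
    using assms unfolding K1_GDD_def is_group_partition_def by blast+
  then show "finite \<A>" "finite \<G>"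
    by (auto intro: finite_subset finite_UnionD)
qed

lemma K1_GDD_is_group_partition:
  assumes "K1_GDD K L X \<G> \<A>"
  shows "is_group_partition X \<G>"
  using assms unfolding K1_GDD_def by blast

lemma K1_GDD_group_subset: "K1_GDD K L X \<G> \<A> \<Longrightarrow> G \<in> \<G> \<Longrightarrow> G \<subseteq> X"
  using K1_GDD_is_group_partition unfolding is_group_partition_def by blast

lemma K1_GDD_group_unique:
  assumes "K1_GDD K L X \<G> \<A>" "G \<in> \<G>" "G' \<in> \<G>" "a \<in> G" "a \<in> G'"
  shows "G = G'"
  using K1_GDD_is_group_partition[OF assms(1)] assms(2-5) unfolding is_group_partition_def by blast

lemma K1_GDD_group_card: "K1_GDD K L X \<G> \<A> \<Longrightarrow> G \<in> \<G> \<Longrightarrow> card G \<in> L"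
  unfolding K1_GDD_def by blast

lemma K1_GDD_block_subset:
  assumes "K1_GDD K L X \<G> \<A>" "A \<in> \<A>"
  shows "A \<subseteq> X"
  using assms unfolding K1_GDD_def by blast

lemma K1_GDD_block_card: "K1_GDD K L X \<G> \<A> \<Longrightarrow> A \<in> \<A> \<Longrightarrow> card A \<in> K"
  unfolding K1_GDD_def by blast

lemma K1_GDD_block_meets_group_once:
  assumes "K1_GDD K L X \<G> \<A>" "A \<in> \<A>" "G \<in> \<G>" "a \<in> A \<inter> G" "b \<in> A \<inter> G"
  shows "a = b"
proof -
  have "A \<subseteq> X" "card (A \<inter> G) \<le> 1" "finite X"
    using assms(1-3) unfolding K1_GDD_def by blast+
  then have "finite (A \<inter> G)" "card (A \<inter> G) \<le> Suc 0"
    using finite_subset by auto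
  then show ?thesis
    using assms(4,5) card_le_Suc0_iff_eq[of "A \<inter> G"] by blast
qed

lemma K1_GDD_pair_block_count:
  assumes "K1_GDD K L X \<G> \<A>" "a \<in> X" "b \<in> X" "a \<noteq> b" "\<not> (\<exists>G\<in>\<G>. a \<in> G \<and> b \<in> G)"
  shows "card {A \<in> \<A>. a \<in> A \<and> b \<in> A} = 1"
  using assms unfolding K1_GDD_def by blast

lemma K1_GDD_pair_cases:
  assumes "K1_GDD K L X \<G> \<A>" "a \<in> X" "b \<in> X"
  obtains (group) G where "G \<in> \<G>" "a \<in> G" "b \<in> G"
    | (block) A where "A \<in> \<A>" "a \<in> A" "b \<in> A" "a \<noteq> b"
proof (cases "a \<noteq> b \<and> \<not> (\<exists>G\<in>\<G>. a \<in> G \<and> b \<in> G)")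
  case True
  then obtain A where "{A \<in> \<A>. a \<in> A \<and> b \<in> A} = {A}"
    using K1_GDD_pair_block_count[OF assms] card_1_singletonE by metis
  then show ?thesis
    using True block by blast
next
  case False
  moreover have "\<Union>\<G> = X"
    using assms(1) unfolding K1_GDD_def is_group_partition_def by blast
  ultimately show ?thesis
    using assms(2) group by blast
qed

lemma K1_GDD_unique_block:
  assumes "K1_GDD K L X \<G> \<A>" "A \<in> \<A>" "A' \<in> \<A>" "a \<in> A \<inter> A'" "b \<in> A \<inter> A'" "a \<noteq> b"
  shows "A = A'"
proof -
  have "a \<in> X" "b \<in> X"
    using K1_GDD_block_subset[OF assms(1,2)] assms(4,5) by auto
  moreover have "\<not> (\<exists>G\<in>\<G>. a \<in> G \<and> b \<in> G)"
    using K1_GDD_block_meets_group_once[OF assms(1,2), of _ a b] assms(4-6) by blast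
  ultimately have "card {A \<in> \<A>. a \<in> A \<and> b \<in> A} = 1"
    by (rule K1_GDD_pair_block_count[OF assms(1) _ _ assms(6)])
  then obtain C where C: "{A \<in> \<A>. a \<in> A \<and> b \<in> A} = {C}"
    by (rule card_1_singletonE)
  have "A \<in> {A \<in> \<A>. a \<in> A \<and> b \<in> A}" "A' \<in> {A \<in> \<A>. a \<in> A \<and> b \<in> A}"
    using assms(2-5) by auto
  then show ?thesis
    unfolding C by simp
qed

section \<open>Inflating a GDD and filling in its groups\<close>

definition inflate :: "nat \<Rightarrow> 'a set \<Rightarrow> ('a \<times> nat) option set" where
  "inflate t S = Some ` (S \<times> {..<t})"

lemma Some_in_inflate_iff [simp]: "Some (a, i) \<in> inflate t S \<longleftrightarrow> a \<in> S \<and> i < t"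
  by (auto simp: inflate_def)

lemma None_notin_inflate [simp]: "None \<notin> inflate t S"
  by (auto simp: inflate_def)

lemma in_inflate_iff: "x \<in> inflate t S \<longleftrightarrow> (\<exists>a i. x = Some (a, i) \<and> a \<in> S \<and> i < t)"
  by (auto simp: inflate_def)

lemma finite_inflate [simp]: "finite S \<Longrightarrow> finite (inflate t S)"
  by (simp add: inflate_def)

lemma card_inflate: "card (inflate t S) = t * card S"
  by (simp add: inflate_def card_image card_cartesian_product)

lemma inflate_mono: "S \<subseteq> T \<Longrightarrow> inflate t S \<subseteq> inflate t T"
  by (auto simp: inflate_def)

lemma inflate_singleton_nonempty: "0 < t \<Longrightarrow> inflate t {a} \<noteq> {}"
  by (auto simp: inflate_def)

lemma partition_on_inflate_singletons:
  fixes A :: "'a set"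
  assumes "0 < t"
  shows "partition_on (inflate t A) ((\<lambda>a. inflate t {a}) ` A)"
proof (rule partition_onI)
  have "inflate t {a} \<noteq> {}" for a :: 'a
    using assms by (rule inflate_singleton_nonempty)
  then show "{} \<notin> (\<lambda>a. inflate t {a}) ` A"
    by auto
next
  show "\<Union>((\<lambda>a. inflate t {a}) ` A) = inflate t A"
    by (auto simp: inflate_def)
next
  fix p q assume "p \<in> (\<lambda>a. inflate t {a}) ` A" "q \<in> (\<lambda>a. inflate t {a}) ` A" "p \<noteq> q"
  then obtain a b where "p = inflate t {a}" "q = inflate t {b}" "a \<noteq> b"
    by blast
  then show "disjnt p q"
    unfolding disjnt_def by (auto simp: in_inflate_iff)
qed

lemma card_inflate_singletons:
  assumes "0 < t"
  shows "card ((\<lambda>a. inflate t {a}) ` A) = card A"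
proof (intro card_image inj_onI)
  fix a b assume "a \<in> A" "b \<in> A" "inflate t {a} = inflate t {b}"
  moreover have "Some (a, 0) \<in> inflate t {a}"
    using assms by simp
  ultimately show "a = b"
    by simp
qed

context
  fixes X :: "'a set" and \<G> \<A> :: "'a set set" and K L :: "nat set"
    and p :: bool and k lam t :: nat and D E :: "'a set \<Rightarrow> ('a \<times> nat) option set multiset"
  assumes master: "K1_GDD K L X \<G> \<A>"
    and block_designs: "\<And>A. A \<in> \<A> \<Longrightarrow>
      GDD_type p k lam t (card A) (inflate t A) ((\<lambda>a. inflate t {a}) ` A) (D A)"
    and group_designs: "\<And>G. G \<in> \<G> \<Longrightarrow>
      BIBD p (t * card G + 1) k lam (insert None (inflate t G)) (E G)"
begin

lemma pair_count_block_design_within_group: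
  assumes A: "A \<in> \<A>" and G: "G \<in> \<G>"
    and xy: "x \<in> insert None (inflate t G)" "y \<in> insert None (inflate t G)" "x \<noteq> y"
  shows "pair_count (D A) x y = 0"
proof (cases "x \<in> inflate t A \<and> y \<in> inflate t A")
  case True
  with xy obtain a i b j where ab: "x = Some (a, i)" "y = Some (b, j)"
    "a \<in> A \<inter> G" "b \<in> A \<inter> G" "i < t" "j < t"
    by (auto simp: in_inflate_iff)
  then have "a = b"
    using K1_GDD_block_meets_group_once[OF master A G] by blast
  then show ?thesis
    using GDD_type_pair_count_same_group[OF block_designs[OF A], of "inflate t {a}"] ab xy(3)
    by simp
next
  case False
  then show ?thesis
    by (intro pair_count_eq_0_if_outside[OF GDD_type_blocks_subset[OF block_designs[OF A]]]) blast
qed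

lemma pair_count_group_design_other_group:
  assumes G: "G \<in> \<G>" and G': "G' \<in> \<G>" "G' \<noteq> G"
    and xy: "x \<in> insert None (inflate t G)" "y \<in> insert None (inflate t G)" "x \<noteq> y"
  shows "pair_count (E G') x y = 0"
proof -
  have "x \<in> inflate t G \<or> y \<in> inflate t G"
    using xy by auto
  then obtain z where z: "z \<in> inflate t G" "z = x \<or> z = y"
    by blast
  then obtain a i where "z = Some (a, i)" "a \<in> G"
    by (auto simp: in_inflate_iff)
  moreover have "a \<notin> G'"
    using K1_GDD_group_unique[OF master G G'(1)] G'(2) \<open>a \<in> G\<close> by blast
  ultimately have "z \<notin> insert None (inflate t G')"
    by simp
  then have "x \<notin> insert None (inflate t G') \<or> y \<notin> insert None (inflate t G')"
    using z(2) by blast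
  then show ?thesis
    by (rule pair_count_eq_0_if_outside[OF BIBD_blocks_subset[OF group_designs[OF G'(1)]]])
qed

lemma pair_count_filled_group:
  assumes G: "G \<in> \<G>" and xy: "x \<in> insert None (inflate t G)" "y \<in> insert None (inflate t G)" "x \<noteq> y"
  shows "pair_count (sum D \<A> + sum E \<G>) x y = pair_count (E G) x y"
proof -
  have "pair_count (sum D \<A>) x y = 0"
    using pair_count_block_design_within_group[OF _ G xy] by (simp add: pair_count_sum)
  moreover have "pair_count (sum E \<G>) x y = pair_count (E G) x y"
    using K1_GDD_finite(2)[OF master] G pair_count_group_design_other_group[OF G _ _ xy]
    by (rule pair_count_sum_single)
  ultimately show ?thesis
    by simp
qed

lemma pair_count_filled_block:
  assumes A: "A \<in> \<A>" and ab: "a \<in> A" "b \<in> A" "a \<noteq> b"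
  shows "pair_count (sum D \<A> + sum E \<G>) (Some (a, i)) (Some (b, j))
       = pair_count (D A) (Some (a, i)) (Some (b, j))"
proof -
  have D_zero: "pair_count (D A') (Some (a, i)) (Some (b, j)) = 0" if A': "A' \<in> \<A>" "A' \<noteq> A" for A'
  proof -
    have "a \<notin> A' \<or> b \<notin> A'"
      using K1_GDD_unique_block[OF master A A'(1)] ab A'(2) by blast
    then have "Some (a, i) \<notin> inflate t A' \<or> Some (b, j) \<notin> inflate t A'"
      by auto
    then show ?thesis
      by (rule pair_count_eq_0_if_outside[OF GDD_type_blocks_subset[OF block_designs[OF A'(1)]]])
  qed
  have E_zero: "pair_count (E G) (Some (a, i)) (Some (b, j)) = 0" if G: "G \<in> \<G>" for G
  proof -
    have "a \<notin> G \<or> b \<notin> G"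
      using K1_GDD_block_meets_group_once[OF master A G] ab by blast
    then have "Some (a, i) \<notin> insert None (inflate t G) \<or> Some (b, j) \<notin> insert None (inflate t G)"
      by auto
    then show ?thesis
      by (rule pair_count_eq_0_if_outside[OF BIBD_blocks_subset[OF group_designs[OF G]]])
  qed
  have "pair_count (sum D \<A>) (Some (a, i)) (Some (b, j)) = pair_count (D A) (Some (a, i)) (Some (b, j))"
    using K1_GDD_finite(1)[OF master] A D_zero by (rule pair_count_sum_single)
  moreover have "pair_count (sum E \<G>) (Some (a, i)) (Some (b, j)) = 0"
    by (simp add: pair_count_sum E_zero)
  ultimately show ?thesis
    by simp
qed

lemma inflated_pair_cases:
  assumes "x \<in> insert None (inflate t X)" "y \<in> insert None (inflate t X)" "x \<noteq> y"
  obtains (group) G where "G \<in> \<G>" "x \<in> insert None (inflate t G)" "y \<in> insert None (inflate t G)"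
    | (block) A a b i j where "A \<in> \<A>" "a \<in> A" "b \<in> A" "a \<noteq> b"
      "x = Some (a, i)" "y = Some (b, j)" "i < t" "j < t"
proof (cases "x = None \<or> y = None")
  case True
  have "x \<in> inflate t X \<or> y \<in> inflate t X"
    using assms by auto
  then obtain z where z: "z \<in> inflate t X" "z = x \<or> z = y"
    by blast
  then obtain b j where bj: "z = Some (b, j)" "b \<in> X" "j < t"
    unfolding in_inflate_iff by blast
  have "\<Union>\<G> = X"
    using K1_GDD_is_group_partition[OF master] by (simp add: is_group_partition_def)
  with bj(2) obtain G where G: "G \<in> \<G>" "b \<in> G"
    by blast
  have "x \<in> insert None (inflate t G)" "y \<in> insert None (inflate t G)"
    using True z(2) bj(1,3) G(2) by auto
  with G(1) show ?thesis
    by (rule group)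
next
  case False
  then have "x \<in> inflate t X" "y \<in> inflate t X"
    using assms by auto
  then obtain a i b j where ab: "x = Some (a, i)" "y = Some (b, j)"
    "a \<in> X" "b \<in> X" "i < t" "j < t"
    unfolding in_inflate_iff by blast
  show ?thesis
  proof (rule K1_GDD_pair_cases[OF master ab(3,4)])
    fix G assume G: "G \<in> \<G>" "a \<in> G" "b \<in> G"
    then have "x \<in> insert None (inflate t G)" "y \<in> insert None (inflate t G)"
      using ab by simp_all
    with G(1) show ?thesis
      by (rule group)
  next
    fix A assume "A \<in> \<A>" "a \<in> A" "b \<in> A" "a \<noteq> b"
    then show ?thesis
      using block ab(1,2,5,6) by blast
  qed
qed

lemma blocks_of_filled_inflation:
  assumes "B \<in># sum D \<A> + sum E \<G>"
  shows "B \<subseteq> insert None (inflate t X)" "card B = k"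
proof -
  consider (block) A where "A \<in> \<A>" "B \<in># D A" | (group) G where "G \<in> \<G>" "B \<in># E G"
    using assms K1_GDD_finite[OF master] by (auto simp: set_mset_sum)
  then have "B \<subseteq> insert None (inflate t X) \<and> card B = k"
  proof cases
    case block
    then have "B \<subseteq> inflate t A" "card B = k"
      using GDD_type_blocks[OF block_designs] by blast+
    moreover have "inflate t A \<subseteq> inflate t X"
      using K1_GDD_block_subset[OF master block(1)] by (rule inflate_mono)
    ultimately show ?thesis
      by blast
  next
    case group
    then have "B \<subseteq> insert None (inflate t G)" "card B = k"
      using BIBD_blocks[OF group_designs] by blast+
    moreover have "inflate t G \<subseteq> inflate t X"
      using K1_GDD_group_subset[OF master group(1)] by (rule inflate_mono)
    ultimately show ?thesis
      by blast
  qed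
  then show "B \<subseteq> insert None (inflate t X)" "card B = k"
    by simp_all
qed

lemma BIBD_filled_inflation:
  "BIBD p (t * card X + 1) k lam (insert None (inflate t X)) (sum D \<A> + sum E \<G>)"
  unfolding BIBD_def
proof (intro conjI ballI impI)
  have "finite X"
    using master by (rule K1_GDD_finite_points)
  then show "finite (insert None (inflate t X))" "card (insert None (inflate t X)) = t * card X + 1"
    by (simp_all add: card_inflate)
next
  fix B assume "B \<in># sum D \<A> + sum E \<G>"
  then show "B \<subseteq> insert None (inflate t X)" "card B = k"
    by (rule blocks_of_filled_inflation)+
next
  fix x y assume "x \<in> insert None (inflate t X)" "y \<in> insert None (inflate t X)" "x \<noteq> y"
  then show "if p then pair_count (sum D \<A> + sum E \<G>) x y \<le> lam
             else pair_count (sum D \<A> + sum E \<G>) x y = lam"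
  proof (rule inflated_pair_cases)
    fix G assume G: "G \<in> \<G>" "x \<in> insert None (inflate t G)" "y \<in> insert None (inflate t G)"
    then show ?thesis
      using pair_count_filled_group[OF G \<open>x \<noteq> y\<close>] BIBD_pair_count[OF group_designs[OF G(1)] G(2,3) \<open>x \<noteq> y\<close>]
      by simp
  next
    fix A a b i j assume A: "A \<in> \<A>" "a \<in> A" "b \<in> A" "a \<noteq> b"
      and xy: "x = Some (a, i)" "y = Some (b, j)" "i < t" "j < t"
    have "x \<in> inflate t A" "y \<in> inflate t A" "\<not> (\<exists>g\<in>(\<lambda>a. inflate t {a}) ` A. x \<in> g \<and> y \<in> g)"
      using A xy by auto
    then show ?thesis
      using pair_count_filled_block[OF A] GDD_type_pair_count[OF block_designs[OF A(1)]] xy \<open>x \<noteq> y\<close>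
      by simp
  qed
qed

end

lemma nested_BIBD_filled_inflation:
  assumes master: "K1_GDD K L X \<G> \<A>" and "2 \<le> k"
    and block_designs: "\<And>A. A \<in> \<A> \<Longrightarrow>
      nested_GDD k 1 t (card A) (inflate t A) ((\<lambda>a. inflate t {a}) ` A) (D A)"
    and group_designs: "\<And>G. G \<in> \<G> \<Longrightarrow>
      nested_BIBD (t * card G + 1) k 1 (insert None (inflate t G)) (E G)"
  shows "nested_BIBD (t * card X + 1) k 1 (insert None (inflate t X)) (sum D \<A> + sum E \<G>)"
proof -
  have "\<forall>A\<in>\<A>. \<exists>N. image_mset fst N = D A \<and> GDD_type True (k + 1) 2 t (card A) (inflate t A)
      ((\<lambda>a. inflate t {a}) ` A) (image_mset (\<lambda>(B, p). insert p B) N)"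
    using nested_GDD_pointed[OF block_designs] unfolding one_add_one by blast
  then obtain ND where ND: "\<forall>A\<in>\<A>. image_mset fst (ND A) = D A \<and> GDD_type True (k + 1) 2 t
      (card A) (inflate t A) ((\<lambda>a. inflate t {a}) ` A) (image_mset (\<lambda>(B, p). insert p B) (ND A))"
    by (rule bchoice[THEN exE])
  have "\<forall>G\<in>\<G>. \<exists>N. image_mset fst N = E G \<and> BIBD True (t * card G + 1) (k + 1) 2
      (insert None (inflate t G)) (image_mset (\<lambda>(B, p). insert p B) N)"
    using nested_BIBD_pointed[OF group_designs] unfolding one_add_one by blast
  then obtain NE where NE: "\<forall>G\<in>\<G>. image_mset fst (NE G) = E G \<and> BIBD True (t * card G + 1)
      (k + 1) 2 (insert None (inflate t G)) (image_mset (\<lambda>(B, p). insert p B) (NE G))"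
    by (rule bchoice[THEN exE])
  define N where "N = sum ND \<A> + sum NE \<G>"
  have fst_N: "image_mset fst N = sum D \<A> + sum E \<G>"
    using ND NE by (simp add: N_def image_mset_sum cong: sum.cong)
  have "BIBD False (t * card X + 1) k 1 (insert None (inflate t X)) (image_mset fst N)"
    unfolding fst_N using master
    by (rule BIBD_filled_inflation)
      (use block_designs group_designs in \<open>simp_all add: nested_GDD_def nested_BIBD_def\<close>)
  moreover note \<open>2 \<le> k\<close>
  moreover have "BIBD True (t * card X + 1) (k + 1) 2 (insert None (inflate t X))
      (image_mset (\<lambda>(B, p). insert p B) N)"
    unfolding N_def image_mset_union image_mset_sum using master
    by (rule BIBD_filled_inflation) (use ND NE in blast)+
  ultimately have "nested_BIBD (t * card X + 1) k 1 (insert None (inflate t X)) (image_mset fst N)"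
    by (rule nested_BIBD_of_pointed)
  then show ?thesis
    unfolding fst_N .
qed

lemma nested_GDD_on_inflation:
  assumes "nested_GDD k lam t u (Y :: 'b set) \<H> M" "finite A" "card A = u" "0 < t"
  shows "\<exists>M'. nested_GDD k lam t u (inflate t A) ((\<lambda>a. inflate t {a}) ` A) M'"
proof (rule nested_GDD_transfer[OF assms(1)])
  show "partition_on (inflate t A) ((\<lambda>a. inflate t {a}) ` A)"
    using assms(4) by (rule partition_on_inflate_singletons)
  show "finite (inflate t A)" "card ((\<lambda>a. inflate t {a}) ` A) = u"
    using assms(2-4) by (simp_all add: card_inflate_singletons)
  show "\<forall>C\<in>(\<lambda>a. inflate t {a}) ` A. card C = t"
    by (simp add: card_inflate)
qed

lemma nested_BIBD_on_inflation:
  assumes "nested_BIBD (t * card G + 1) k lam (Y :: 'b set) M" "finite G"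
  shows "\<exists>M'. nested_BIBD (t * card G + 1) k lam (insert None (inflate t G)) M'"
  using nested_BIBD_transfer[OF assms(1), of "insert None (inflate t G)"] assms(2)
  by (simp add: card_inflate)

lemma ex_block_designs_on_inflation:
  assumes master: "K1_GDD K L X \<G> \<A>" and "0 < t"
    and ingredients: "\<forall>u\<in>K. \<exists>(Y :: 'b set) \<H> M. nested_GDD k lam t u Y \<H> M"
  shows "\<exists>D. \<forall>A\<in>\<A>. nested_GDD k lam t (card A) (inflate t A) ((\<lambda>a. inflate t {a}) ` A) (D A)"
proof (rule bchoice, rule ballI)
  fix A assume A: "A \<in> \<A>"
  have "\<exists>(Y :: 'b set) \<H> M. nested_GDD k lam t (card A) Y \<H> M"
    using ingredients K1_GDD_block_card[OF master A] by (rule bspec)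
  then obtain Y :: "'b set" and \<H> M where ingredient: "nested_GDD k lam t (card A) Y \<H> M"
    by blast
  have "finite A"
    using K1_GDD_block_subset[OF master A] K1_GDD_finite_points[OF master] by (rule finite_subset)
  with ingredient show "\<exists>M. nested_GDD k lam t (card A) (inflate t A) ((\<lambda>a. inflate t {a}) ` A) M"
    using \<open>0 < t\<close> by (rule nested_GDD_on_inflation[OF _ _ refl])
qed

lemma ex_group_designs_on_inflation:
  assumes master: "K1_GDD K L X \<G> \<A>"
    and ingredients: "\<forall>l\<in>L. \<exists>(Y :: 'b set) M. nested_BIBD (t * l + 1) k lam Y M"
  shows "\<exists>E. \<forall>G\<in>\<G>. nested_BIBD (t * card G + 1) k lam (insert None (inflate t G)) (E G)"
proof (rule bchoice, rule ballI)
  fix G assume G: "G \<in> \<G>"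
  have "\<exists>(Y :: 'b set) M. nested_BIBD (t * card G + 1) k lam Y M"
    using ingredients K1_GDD_group_card[OF master G] by (rule bspec)
  then obtain Y :: "'b set" and M where ingredient: "nested_BIBD (t * card G + 1) k lam Y M"
    by blast
  have "finite G"
    using K1_GDD_group_subset[OF master G] K1_GDD_finite_points[OF master] by (rule finite_subset)
  with ingredient show "\<exists>M. nested_BIBD (t * card G + 1) k lam (insert None (inflate t G)) M"
    by (rule nested_BIBD_on_inflation)
qed

theorem mainTheorem8:
  fixes K L :: "nat set" and X :: "'a set" and \<G> \<A> :: "'a set set"
  assumes "\<forall>k\<in>K. k > 0" and "\<forall>l\<in>L. l > 0"
    and "K1_GDD K L X \<G> \<A>"
    and "\<forall>k\<in>K. \<exists>(Y :: nat set) \<H> \<B>. nested_GDD 4 1 3 k Y \<H> \<B>"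
    and "\<forall>l\<in>L. \<exists>(Y :: nat set) \<B>. nested_BIBD (3 * l + 1) 4 1 Y \<B>"
  shows "\<exists>(Y :: nat set) \<B>. nested_BIBD (3 * card X + 1) 4 1 Y \<B>"
proof -
  note master = assms(3)
  obtain D where D: "\<forall>A\<in>\<A>. nested_GDD 4 1 3 (card A) (inflate 3 A) ((\<lambda>a. inflate 3 {a}) ` A) (D A)"
    using ex_block_designs_on_inflation[OF master _ assms(4)] by auto
  obtain E where E: "\<forall>G\<in>\<G>. nested_BIBD (3 * card G + 1) 4 1 (insert None (inflate 3 G)) (E G)"
    using ex_group_designs_on_inflation[OF master assms(5)] by auto
  have "nested_BIBD (3 * card X + 1) 4 1 (insert None (inflate 3 X)) (sum D \<A> + sum E \<G>)"
    using master by (rule nested_BIBD_filled_inflation) (use D E in simp_all)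
  from nested_BIBD_transfer[OF this finite_lessThan card_lessThan]
  show ?thesis
    by blast
qed

end
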